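(* Let $l=2^s$ with $s$ an integer and $l>2$, and let $q=l^2$. Then there exists a quantum MDS code with parameters $[[l^2+1,\,l^2-2l+3,\,l]]_q$; in particular, there exists a $q$-ary quantum MDS code of length $l^2+1$ and minimum distance $l$.
   Context: Quantum codes: let $V_n=(\mathbb{C}^q)^{\otimes n}$ with orthonormal basis $\{|\mathbf{c}\rangle:\mathbf{c}\in\mathbb{F}_q^n\}$, $q=p^e$. For $a,b\in\mathbb{F}_q$ define $X(a)|x\rangle=|x+a\rangle$, $Z(b)|x\rangle=\omega^{\mathrm{tr}(bx)}|x\rangle$ with $\omega=e^{2\pi i/p}$ and $\mathrm{tr}:\mathbb{F}_q\to\mathbb{F}_p$ the trace; for $\mathbf{a},\mathbf{b}\in\mathbb{F}_q^n$ let $X(\mathbf{a})=\bigotimes_i X(a_i)$, $Z(\mathbf{b})=\bigotimes_i Z(b_i)$. The error group is $G_n=\{\omega^cX(\mathbf{a})Z(\mathbf{b})\}$, and the weight of $\omega^cX(\mathbf{a})Z(\mathbf{b})$ is the number of $i$ with $(a_i,b_i)\ne(0,0)$. A quantum code with parameters $[[n,k,d]]_q$ is a subspace $Q\subseteq V_n$ of dimension $q^k$ with minimum distance $d$: for all $|u\rangle,|v\rangle\in Q$ with $\langle u|v\rangle=0$ and every $E\in G_n$ of weight at most $d-1$, $\langle u|E|v\rangle=0$ (with the standard purity-based convention when $k=0$). Every $[[n,k,d]]_q$ quantum code satisfies the quantum Singleton bound $2d\le n-k+2$; a code attaining $2d=n-k+2$ is called a quantum MDS code. *)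

theory Defs
  imports "HOL-Analysis.Analysis" "HOL-Library.Function_Algebras"
begin

text \<open>Words of length n over F_q are represented as functions nat => F_q that vanish
  at every index >= n (coordinates 0..n-1).  A state of V_n = (C^q)^(tensor n) is a
  function from words to complex numbers (its coordinates in the basis |c>),
  vanishing outside the words of length n.\<close>

definition words :: "nat \<Rightarrow> (nat \<Rightarrow> 'a::zero) set" where
  "words n = {c. \<forall>i\<ge>n. c i = 0}"

definition Vn :: "nat \<Rightarrow> ((nat \<Rightarrow> 'a::zero) \<Rightarrow> complex) set" where
  "Vn n = {v. \<forall>x. x \<notin> words n \<longrightarrow> v x = 0}"

definition cscale :: "complex \<Rightarrow> ('b \<Rightarrow> complex) \<Rightarrow> ('b \<Rightarrow> complex)" where
  "cscale c f = (\<lambda>x. c * f x)"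

definition qinner :: "nat \<Rightarrow> ((nat \<Rightarrow> 'a::{zero,finite}) \<Rightarrow> complex)
    \<Rightarrow> ((nat \<Rightarrow> 'a) \<Rightarrow> complex) \<Rightarrow> complex" where
  "qinner n u v = (\<Sum>x\<in>words n. cnj (u x) * v x)"

definition fdeg :: "'a::{finite,field} itself \<Rightarrow> nat" where
  "fdeg _ = (LEAST e. 0 < e \<and> CHAR('a) ^ e = CARD('a))"

definition ftrace :: "'a::{finite,field} \<Rightarrow> 'a" where
  "ftrace x = (\<Sum>i<fdeg TYPE('a). x ^ (CHAR('a) ^ i))"

text \<open>omega^t for t in the prime field F_p (identified with {0..p-1}), omega = exp(2 pi i/p).\<close>
definition omega_pow :: "'a::{finite,field} \<Rightarrow> complex" where
  "omega_pow t = exp (2 * pi * \<i> * of_nat (THE k. k < CHAR('a) \<and> of_nat k = t) / of_nat CHAR('a))"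

definition omega_nat :: "'a::{finite,field} itself \<Rightarrow> nat \<Rightarrow> complex" where
  "omega_nat _ c = exp (2 * pi * \<i> * of_nat c / of_nat CHAR('a))"

text \<open>Action of the error omega^c X(a) Z(b) on a state v:
  Z(b)|y> = prod_i omega^(tr(b_i y_i)) |y>,  X(a)|y> = |y + a>, so
  (X(a)Z(b)v)(x) = prod_i omega^(tr(b_i (x_i - a_i))) * v(x - a).\<close>
definition err_apply :: "nat \<Rightarrow> nat \<Rightarrow> (nat \<Rightarrow> 'a::{finite,field}) \<Rightarrow> (nat \<Rightarrow> 'a)
    \<Rightarrow> ((nat \<Rightarrow> 'a) \<Rightarrow> complex) \<Rightarrow> ((nat \<Rightarrow> 'a) \<Rightarrow> complex)" where
  "err_apply n c a b v = (\<lambda>x. if x \<in> words n then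
       omega_nat TYPE('a) c * (\<Prod>i<n. omega_pow (ftrace (b i * (x i - a i)))) * v (x - a)
     else 0)"

definition err_weight :: "nat \<Rightarrow> (nat \<Rightarrow> 'a::zero) \<Rightarrow> (nat \<Rightarrow> 'a) \<Rightarrow> nat" where
  "err_weight n a b = card {i. i < n \<and> (a i \<noteq> 0 \<or> b i \<noteq> 0)}"

definition has_min_distance :: "nat \<Rightarrow> ((nat \<Rightarrow> 'a::{finite,field}) \<Rightarrow> complex) set \<Rightarrow> nat \<Rightarrow> bool" where
  "has_min_distance n Q d \<longleftrightarrow>
     (\<forall>u\<in>Q. \<forall>v\<in>Q. qinner n u v = 0 \<longrightarrow>
        (\<forall>c a b. a \<in> words n \<and> b \<in> words n \<and> err_weight n a b \<le> d - 1 \<longrightarrow>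
            qinner n u (err_apply n c a b v) = 0))"

definition is_quantum_code :: "nat \<Rightarrow> nat \<Rightarrow> nat \<Rightarrow> ((nat \<Rightarrow> 'a::{finite,field}) \<Rightarrow> complex) set \<Rightarrow> bool" where
  "is_quantum_code n k d Q \<longleftrightarrow>
     Q \<subseteq> Vn n \<and> module.subspace cscale Q \<and>
     vector_space.dim cscale Q = CARD('a) ^ k \<and> has_min_distance n Q d"

text \<open>Quantum MDS code: attains the quantum Singleton bound 2d = n - k + 2.\<close>
definition is_quantum_MDS_code :: "nat \<Rightarrow> nat \<Rightarrow> nat \<Rightarrow> ((nat \<Rightarrow> 'a::{finite,field}) \<Rightarrow> complex) set \<Rightarrow> bool" where
  "is_quantum_MDS_code n k d Q \<longleftrightarrow> is_quantum_code n k d Q \<and> 2 * d + k = n + 2"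

end

theory Submission
  imports Defs "HOL-Computational_Algebra.Polynomial"
begin

text \<open>The code is the CSS code of a self-orthogonal extended generalised Reed--Solomon code
  \<open>C\<close> of length \<open>q + 1\<close> and dimension \<open>l - 1\<close> over \<open>F\<^sub>q\<close>.  Its column multipliers are
  square roots of \<open>u(\<alpha>)\<close> for a monic polynomial \<open>u\<close> of degree \<open>q - 1 - 2(l - 2)\<close> without roots
  in \<open>F\<^sub>q\<close>; the power sums \<open>\<Sum>\<^sub>x x\<^sup>m\<close> over the field then make \<open>C\<close> orthogonal to itself.
  The dual \<open>C\<^sup>\<bottom>\<close> is MDS of minimum distance \<open>l\<close>.  The states supported on \<open>C\<^sup>\<bottom>\<close> and invariant
  under translation by \<open>C\<close> form a space of dimension \<open>|C\<^sup>\<bottom>|/|C| = q\<^bsup>q+1-2(l-1)\<^esup>\<close>.  An error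
  of weight \<open>< l\<close> whose \<open>X\<close>-part lies outside \<open>C\<^sup>\<bottom>\<close> moves code states off \<open>C\<^sup>\<bottom>\<close>; one whose
  \<open>Z\<close>-part lies outside \<open>C\<^sup>\<bottom>\<close> is detected by a character sum over a coset of \<open>C\<close>; otherwise
  both parts are zero by the distance of \<open>C\<^sup>\<bottom>\<close> and the error is a scalar.\<close>

section \<open>Finite fields\<close>

lemma finite_field_power_card_minus_one:
  fixes x :: "'a::{finite,field}"
  assumes "x \<noteq> 0"
  shows "x ^ (CARD('a) - 1) = 1"
proof -
  have "(\<Prod>y\<in>-{0}. x * y) = (\<Prod>y\<in>-{0::'a}. y)"
    by (rule prod.reindex_bij_witness[of _ "\<lambda>y. y / x" "\<lambda>y. x * y"]) (use assms in auto)
  then have "x ^ card (-{0::'a}) * (\<Prod>y\<in>-{0::'a}. y) = (\<Prod>y\<in>-{0::'a}. y)"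
    by (simp add: prod.distrib)
  moreover have "(\<Prod>y\<in>-{0::'a}. y) \<noteq> 0"
    by simp
  moreover have "card (-{0::'a}) = CARD('a) - 1"
    by (simp add: Compl_eq_Diff_UNIV card_Diff_singleton)
  ultimately show ?thesis
    by simp
qed

lemma finite_field_power_card:
  fixes x :: "'a::{finite,field}"
  shows "x ^ CARD('a) = x"
proof (cases "x = 0")
  case False
  have "x ^ CARD('a) = x * x ^ (CARD('a) - 1)"
    by (simp flip: power_Suc)
  then show ?thesis
    using finite_field_power_card_minus_one[OF False] by simp
qed simp

lemma poly_nonroot_exists:
  fixes p :: "'a::field poly"
  assumes "p \<noteq> 0" and "degree p < card A" and "finite A"
  obtains x where "x \<in> A" and "poly p x \<noteq> 0"
proof -
  have "\<not> A \<subseteq> {x. poly p x = 0}"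
  proof
    assume "A \<subseteq> {x. poly p x = 0}"
    then have "card A \<le> card {x. poly p x = 0}"
      by (intro card_mono poly_roots_finite assms(1))
    also have "\<dots> \<le> degree p"
      by (rule card_poly_roots_bound[OF assms(1)])
    finally show False
      using assms(2) by simp
  qed
  then show ?thesis
    using that by blast
qed

lemma of_nat_card_finite_ring: "of_nat CARD('a::{finite,ring_1}) = (0::'a)"
proof -
  have "(\<Sum>x\<in>UNIV. x + 1) = (\<Sum>x\<in>UNIV. x :: 'a)"
    by (rule sum.reindex_bij_witness[of _ "\<lambda>y. y - 1" "\<lambda>y. y + 1"]) auto
  then show ?thesis
    by (simp add: sum.distrib)
qed

lemma finite_field_power_sum:
  assumes "N < CARD('a::{finite,field}) - 1"
  shows "(\<Sum>x\<in>UNIV. x ^ N :: 'a) = 0"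
proof (cases "N = 0")
  case True
  then show ?thesis
    by (simp add: of_nat_card_finite_ring)
next
  case False
  let ?p = "monom (1::'a) N - 1"
  have "coeff ?p N = 1"
    using False by (simp add: coeff_monom)
  then have nonzero: "?p \<noteq> 0"
    by (metis coeff_0 one_neq_zero)
  have degree: "degree ?p < card (-{0::'a})"
  proof -
    have "degree ?p \<le> N"
      by (intro degree_diff_le) (auto simp: degree_monom_le)
    then show ?thesis
      using assms by (simp add: Compl_eq_Diff_UNIV card_Diff_singleton)
  qed
  obtain b where "b \<in> -{0}" and "poly ?p b \<noteq> 0"
    by (rule poly_nonroot_exists[OF nonzero degree]) simp
  then have b: "b \<noteq> 0" "b ^ N \<noteq> 1"
    by (auto simp: poly_monom)
  have "(\<Sum>x\<in>UNIV. x ^ N :: 'a) = (\<Sum>x\<in>UNIV. (b * x) ^ N)"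
    by (rule sum.reindex_bij_witness[of _ "\<lambda>y. b * y" "\<lambda>y. y / b"]) (use b in auto)
  also have "\<dots> = b ^ N * (\<Sum>x\<in>UNIV. x ^ N)"
    by (simp add: power_mult_distrib sum_distrib_left)
  finally have "(1 - b ^ N) * (\<Sum>x\<in>UNIV. x ^ N) = 0"
    by (simp add: algebra_simps)
  then show ?thesis
    using b by simp
qed

lemma finite_field_power_sum_card_minus_one:
  "(\<Sum>x\<in>UNIV. x ^ (CARD('a::{finite,field}) - 1) :: 'a) = -1"
proof -
  have card_ge: "2 \<le> CARD('a)"
    using card_mono[of UNIV "{0::'a, 1}"] by simp
  have "(\<Sum>x\<in>UNIV. x ^ (CARD('a) - 1) :: 'a) = (\<Sum>x\<in>-{0}. x ^ (CARD('a) - 1))"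
    using card_ge by (intro sum.mono_neutral_right) auto
  also have "\<dots> = (\<Sum>x\<in>-{0::'a}. 1)"
    by (intro sum.cong refl finite_field_power_card_minus_one) simp
  also have "\<dots> = of_nat CARD('a) - 1"
    using card_ge by (simp add: Compl_eq_Diff_UNIV card_Diff_singleton of_nat_diff)
  finally show ?thesis
    by (simp add: of_nat_card_finite_ring)
qed

lemma monic_poly_moments:
  fixes u :: "'a::{finite,field} poly"
  assumes monic: "lead_coeff u = 1" and degree: "degree u + M = CARD('a) - 1" and "m \<le> M"
  shows "(\<Sum>x\<in>UNIV. poly u x * x ^ m) = (if m = M then -1 else 0)"
proof -
  have "(\<Sum>x\<in>UNIV. poly u x * x ^ m) = (\<Sum>r\<le>degree u. coeff u r * (\<Sum>x\<in>UNIV. x ^ (r + m)))"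
    by (simp add: poly_altdef sum_distrib_left sum_distrib_right power_add mult_ac sum.swap[of _ UNIV])
  also have "\<dots> = (\<Sum>r\<le>degree u. if r = degree u \<and> m = M then -1 else 0)"
  proof (intro sum.cong refl)
    fix r assume r: "r \<in> {..degree u}"
    show "coeff u r * (\<Sum>x\<in>UNIV. x ^ (r + m)) = (if r = degree u \<and> m = M then -1 else 0)"
    proof (cases "r = degree u \<and> m = M")
      case True
      then have "r + m = CARD('a) - 1"
        using degree by simp
      then show ?thesis
        using True monic finite_field_power_sum_card_minus_one by (simp only:) simp
    next
      case False
      then have "r + m < CARD('a) - 1"
        using r degree \<open>m \<le> M\<close> by (cases "r = degree u") auto
      then show ?thesis
        using False by (simp add: finite_field_power_sum)
    qed
  qed
  also have "\<dots> = (if m = M then -1 else 0)"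
    by simp
  finally show ?thesis .
qed

section \<open>Characteristic two: trace and additive character\<close>

context
  fixes e :: nat
  assumes card_eq_power_two: "CARD('a::{finite,field}) = 2 ^ e" and exponent_pos: "0 < e"
begin

lemma CHAR_eq_two: "CHAR('a) = 2"
proof -
  have "prime CHAR('a)"
    by (intro prime_CHAR_semidom finite_imp_CHAR_pos) simp
  moreover have "CHAR('a) dvd 2 ^ e"
    unfolding card_eq_power_two[symmetric] of_nat_eq_0_iff_char_dvd[symmetric]
    by (rule of_nat_card_finite_ring)
  ultimately show ?thesis
    by (intro primes_dvd_imp_eq two_is_prime_nat) (auto dest: prime_dvd_power)
qed

lemma two_eq_zero: "(2 :: 'a) = 0"
  using of_nat_CHAR[where 'a = 'a] by (simp add: CHAR_eq_two)

lemma power_two_power_add: "(x + y :: 'a) ^ (2 ^ i) = x ^ (2 ^ i) + y ^ (2 ^ i)"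
  by (rule freshmans_dream') (simp_all add: CHAR_eq_two)

lemma square_root_witness: "((y :: 'a) ^ (2 ^ (e - 1))) ^ 2 = y"
proof -
  have "2 ^ (e - 1) * 2 = CARD('a)"
    using exponent_pos by (cases e) (simp_all add: card_eq_power_two)
  then show ?thesis
    by (simp add: finite_field_power_card flip: power_mult)
qed

lemma fdeg_eq: "fdeg TYPE('a) = e"
  unfolding fdeg_def CHAR_eq_two card_eq_power_two
  by (rule Least_equality) (use exponent_pos in auto)

lemma ftrace_eq: "ftrace (x :: 'a) = (\<Sum>i<e. x ^ (2 ^ i))"
  unfolding ftrace_def fdeg_eq CHAR_eq_two ..

lemma ftrace_add: "ftrace (x + y :: 'a) = ftrace x + ftrace y"
  unfolding ftrace_eq by (simp add: power_two_power_add sum.distrib)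

lemma ftrace_zero: "ftrace (0 :: 'a) = 0"
  unfolding ftrace_eq by (simp add: power_0_left)

text \<open>The trace is fixed by the Frobenius map, which permutes the conjugates
  \<open>x, x\<^sup>2, \<dots>, x\<^bsup>2\<^sup>e\<^sup>-\<^sup>1\<^esup>\<close> cyclically since \<open>x\<^bsup>2\<^sup>e\<^esup> = x\<close>.\<close>
lemma ftrace_square: "ftrace (x :: 'a) ^ 2 = ftrace x"
proof -
  have "ftrace x ^ 2 = (\<Sum>i<e. (x ^ 2 ^ i) ^ 2)"
    unfolding ftrace_eq by (rule freshmans_dream_sum'[where n = 1]) (simp_all add: CHAR_eq_two)
  also have "\<dots> = (\<Sum>i<e. x ^ (2 ^ Suc i))"
    by (simp add: power_mult[symmetric] mult.commute)
  also have "\<dots> = (\<Sum>i<Suc e. x ^ (2 ^ i)) - x"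
    by (subst sum.lessThan_Suc_shift) simp
  also have "\<dots> = ftrace x"
    using finite_field_power_card[of x] by (simp add: ftrace_eq card_eq_power_two)
  finally show ?thesis .
qed

lemma ftrace_cases: "ftrace (x :: 'a) = 0 \<or> ftrace x = 1"
proof -
  have "ftrace x * (ftrace x - 1) = 0"
    using ftrace_square[of x] by (simp add: power2_eq_square algebra_simps)
  then show ?thesis
    by auto
qed

lemma ex_ftrace_eq_one: "\<exists>x :: 'a. ftrace x = 1"
proof -
  define P where "P = (\<Sum>i<e. monom (1::'a) (2 ^ i))"
  have "coeff P (2 ^ (e - 1)) = (\<Sum>i<e. if i = e - 1 then 1 else 0)"
    unfolding P_def coeff_sum coeff_monom by (intro sum.cong refl) simp
  also have "\<dots> = 1"
    using exponent_pos by simp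
  finally have "coeff P (2 ^ (e - 1)) = 1" .
  then have nonzero: "P \<noteq> 0"
    by (metis coeff_0 one_neq_zero)
  have degree: "degree P < card (UNIV :: 'a set)"
  proof -
    have "degree P \<le> 2 ^ (e - 1)"
      unfolding P_def
      by (intro degree_sum_le) (auto intro!: order.trans[OF degree_monom_le] power_increasing)
    also have "\<dots> < 2 ^ e"
      using exponent_pos by simp
    finally show ?thesis
      by (simp add: card_eq_power_two)
  qed
  obtain x where "poly P x \<noteq> 0"
    by (rule poly_nonroot_exists[OF nonzero degree]) auto
  then have "ftrace x \<noteq> 0"
    by (simp add: P_def ftrace_eq poly_sum poly_monom)
  then show ?thesis
    using ftrace_cases by blast
qed

lemma omega_pow_zero: "omega_pow (0 :: 'a) = 1"
proof -
  have "(THE k. k < CHAR('a) \<and> of_nat k = (0 :: 'a)) = 0"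
    unfolding CHAR_eq_two by (rule the_equality) (auto simp: less_2_cases_iff)
  then show ?thesis
    by (simp add: omega_pow_def)
qed

lemma omega_pow_one: "omega_pow (1 :: 'a) = -1"
proof -
  have "(THE k. k < CHAR('a) \<and> of_nat k = (1 :: 'a)) = 1"
    unfolding CHAR_eq_two by (rule the_equality) (auto simp: less_2_cases_iff)
  then show ?thesis
    by (simp add: omega_pow_def CHAR_eq_two)
qed

lemma omega_pow_ftrace_add:
  "omega_pow (ftrace (x + y :: 'a)) = omega_pow (ftrace x) * omega_pow (ftrace y)"
  using ftrace_cases[of x] ftrace_cases[of y] two_eq_zero
  by (auto simp: ftrace_add omega_pow_zero omega_pow_one)

lemma omega_pow_ftrace_sum:
  "(\<Prod>i\<in>A. omega_pow (ftrace (f i :: 'a))) = omega_pow (ftrace (\<Sum>i\<in>A. f i))"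
  by (induction A rule: infinite_finite_induct)
    (simp_all add: omega_pow_ftrace_add ftrace_zero omega_pow_zero)

lemma ex_omega_pow_ftrace_neq_one: "\<exists>x :: 'a. omega_pow (ftrace x) \<noteq> 1"
proof -
  obtain x :: 'a where "ftrace x = 1"
    using ex_ftrace_eq_one by blast
  then have "omega_pow (ftrace x) = -1"
    by (simp add: omega_pow_one)
  then show ?thesis
    by (intro exI[of _ x]) simp
qed

end

section \<open>Words and linear codes\<close>

lemma words_zero [simp]: "0 \<in> words n"
  by (simp add: words_def)

lemma words_add: "(x :: nat \<Rightarrow> 'a::monoid_add) \<in> words n \<Longrightarrow> y \<in> words n \<Longrightarrow> x + y \<in> words n"
  by (simp add: words_def)

lemma words_diff: "(x :: nat \<Rightarrow> 'a::group_add) \<in> words n \<Longrightarrow> y \<in> words n \<Longrightarrow> x - y \<in> words n"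
  by (simp add: words_def)

lemma words_scale: "(x :: nat \<Rightarrow> 'a::mult_zero) \<in> words n \<Longrightarrow> (\<lambda>i. t * x i) \<in> words n"
  by (simp add: words_def)

lemma words_mono: "m \<le> n \<Longrightarrow> words m \<subseteq> words n"
  by (auto simp: words_def)

lemma bij_betw_words_PiE:
  "bij_betw (\<lambda>x. restrict x {..<n}) (words n) (\<Pi>\<^sub>E i\<in>{..<n}. UNIV)"
  by (rule bij_betwI[where g = "\<lambda>y i. if i < n then y i else 0"])
    (auto simp: words_def fun_eq_iff PiE_def extensional_def)

lemma finite_words [simp]: "finite (words n :: (nat \<Rightarrow> 'a::{zero,finite}) set)"
proof -
  have "finite (\<Pi>\<^sub>E i\<in>{..<n}. (UNIV :: 'a set))"
    by (rule finite_PiE) simp_all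
  then show ?thesis
    using bij_betw_finite[OF bij_betw_words_PiE] by blast
qed

lemma card_words: "card (words n :: (nat \<Rightarrow> 'a::{zero,finite}) set) = CARD('a) ^ n"
  using bij_betw_same_card[OF bij_betw_words_PiE] by (simp add: card_PiE)

definition dot :: "nat \<Rightarrow> (nat \<Rightarrow> 'a::comm_semiring_1) \<Rightarrow> (nat \<Rightarrow> 'a) \<Rightarrow> 'a" where
  "dot n x y = (\<Sum>i<n. x i * y i)"

definition dual_code :: "nat \<Rightarrow> (nat \<Rightarrow> 'a::comm_semiring_1) set \<Rightarrow> (nat \<Rightarrow> 'a) set" where
  "dual_code n C = {x \<in> words n. \<forall>c\<in>C. dot n x c = 0}"

definition hamming_weight :: "nat \<Rightarrow> (nat \<Rightarrow> 'a::zero) \<Rightarrow> nat" where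
  "hamming_weight n x = card {i. i < n \<and> x i \<noteq> 0}"

lemma dot_add_right: "dot n x (y + z) = dot n x y + dot n x z"
  by (simp add: dot_def distrib_left sum.distrib)

lemma dot_scale_right: "dot n x (\<lambda>i. t * y i) = t * dot n x y"
  by (simp add: dot_def sum_distrib_left mult_ac)

lemma dot_add_left: "dot n (x + y) z = dot n x z + dot n y z"
  by (simp add: dot_def distrib_right sum.distrib)

lemma dot_diff_left: "dot n (x - y :: nat \<Rightarrow> 'a::comm_ring_1) z = dot n x z - dot n y z"
  by (simp add: dot_def left_diff_distrib sum_subtractf)

lemma hamming_weight_words: "x \<in> words k \<Longrightarrow> hamming_weight n x \<le> k"
  unfolding hamming_weight_def words_def
  by (rule order.trans[OF card_mono[of "{..<k}"]]) (auto simp: not_le[symmetric])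

lemma hamming_weight_le_err_weight:
  "hamming_weight n a \<le> err_weight n a b" "hamming_weight n b \<le> err_weight n a b"
  unfolding hamming_weight_def err_weight_def by (auto intro: card_mono)

lemma card_kernel_mult:
  fixes s :: "(nat \<Rightarrow> 'a::{finite,field}) \<Rightarrow> nat \<Rightarrow> 'a"
  assumes diff: "\<And>x y. s (x - y) = s x - s y"
    and range: "\<And>x. s x \<in> words k"
    and inj: "inj_on s (words k)"
    and "k \<le> n"
  shows "card {x \<in> words n. s x = 0} * CARD('a) ^ k = CARD('a) ^ n"
proof -
  have zero: "s 0 = 0"
    using diff[of 0 0] by simp
  have add: "s (x + y) = s x + s y" for x y
    using diff[of x "0 - y"] diff[of 0 y] zero by simp
  have "s ` words k = words k"
    using range inj by (intro card_subset_eq finite_words card_image) auto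
  define \<sigma> where "\<sigma> = inv_into (words k) s"
  have \<sigma>: "\<sigma> y \<in> words n" "s (\<sigma> y) = y" if "y \<in> words k" for y
  proof -
    have y: "y \<in> s ` words k"
      using \<open>s ` words k = words k\<close> that by simp
    have "\<sigma> y \<in> words k"
      unfolding \<sigma>_def by (rule inv_into_into[OF y])
    then show "\<sigma> y \<in> words n"
      using words_mono[OF \<open>k \<le> n\<close>] by blast
    show "s (\<sigma> y) = y"
      unfolding \<sigma>_def by (rule f_inv_into_f[OF y])
  qed
  have "bij_betw (\<lambda>(d, y). d + \<sigma> y) ({x \<in> words n. s x = 0} \<times> words k) (words n)"
    by (rule bij_betwI[where g = "\<lambda>x. (x - \<sigma> (s x), s x)"])
      (auto simp: \<sigma> range diff add words_add words_diff)
  from bij_betw_same_card[OF this] show ?thesis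
    by (simp add: card_cartesian_product card_words)
qed

locale linear_code =
  fixes n :: nat and C :: "(nat \<Rightarrow> 'a::{finite,field}) set"
  assumes code_subset_words: "C \<subseteq> words n"
    and zero_in_code: "0 \<in> C"
    and add_in_code: "c \<in> C \<Longrightarrow> c' \<in> C \<Longrightarrow> c + c' \<in> C"
    and scale_in_code: "c \<in> C \<Longrightarrow> (\<lambda>i. t * c i) \<in> C"
begin

lemma diff_in_code:
  assumes "c \<in> C" and "c' \<in> C"
  shows "c - c' \<in> C"
proof -
  have "c + (\<lambda>i. (-1) * c' i) \<in> C"
    using assms by (intro add_in_code scale_in_code)
  moreover have "c + (\<lambda>i. (-1) * c' i) = c - c'"
    by (simp add: fun_eq_iff)
  ultimately show ?thesis
    by simp
qed

lemma finite_code: "finite C"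
  using code_subset_words by (rule finite_subset) simp

lemma card_code_pos: "0 < card C"
  using finite_code zero_in_code by (auto simp: card_gt_0_iff)

lemma dual_code_add: "x \<in> dual_code n C \<Longrightarrow> y \<in> dual_code n C \<Longrightarrow> x + y \<in> dual_code n C"
  by (simp add: dual_code_def dot_add_left words_add)

lemma dual_code_diff: "x \<in> dual_code n C \<Longrightarrow> y \<in> dual_code n C \<Longrightarrow> x - y \<in> dual_code n C"
  by (simp add: dual_code_def dot_diff_left words_diff)

end

definition encode :: "nat \<Rightarrow> (nat \<Rightarrow> nat \<Rightarrow> 'a::comm_semiring_1) \<Rightarrow> (nat \<Rightarrow> 'a) \<Rightarrow> nat \<Rightarrow> 'a" where
  "encode k G a = (\<lambda>i. \<Sum>j<k. a j * G j i)"

lemma encode_add: "encode k G (a + b) = encode k G a + encode k G b"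
  by (simp add: encode_def fun_eq_iff distrib_right sum.distrib)

lemma encode_scale: "encode k G (\<lambda>j. t * a j) = (\<lambda>i. t * encode k G a i)"
  by (simp add: encode_def sum_distrib_left mult_ac)

lemma encode_zero: "encode k G 0 = 0"
  by (simp add: encode_def fun_eq_iff)

lemma encode_words: "(\<And>j. j < k \<Longrightarrow> G j \<in> words n) \<Longrightarrow> encode k G a \<in> words n"
  by (simp add: encode_def words_def)

lemma dot_encode: "dot n x (encode k G a) = (\<Sum>j<k. a j * dot n x (G j))"
  unfolding dot_def encode_def sum_distrib_left
  by (subst sum.swap) (simp add: mult_ac)

lemma linear_code_encode:
  fixes G :: "nat \<Rightarrow> nat \<Rightarrow> 'a::{finite,field}"
  assumes "\<And>j. j < k \<Longrightarrow> G j \<in> words n"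
  shows "linear_code n (encode k G ` words k)"
proof
  show "encode k G ` words k \<subseteq> words n"
    using assms encode_words by blast
  show "0 \<in> encode k G ` words k"
    using encode_zero words_zero by (metis image_eqI)
  show "c + c' \<in> encode k G ` words k" if "c \<in> encode k G ` words k" "c' \<in> encode k G ` words k" for c c'
    using that by (auto simp flip: encode_add intro!: imageI words_add)
  show "(\<lambda>i. t * c i) \<in> encode k G ` words k" if "c \<in> encode k G ` words k" for c t
    using that by (auto simp flip: encode_scale intro!: imageI words_scale)
qed

lemma dual_code_encode:
  "dual_code n (encode k G ` words k) = {x \<in> words n. \<forall>j<k. dot n x (G j) = 0}"
proof -
  have "dot n x (G j) = 0" if "\<forall>a\<in>words k. dot n x (encode k G a) = 0" "j < k" for x j
  proof -
    let ?e = "\<lambda>i. if i = j then 1 else 0"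
    have "?e \<in> words k"
      using \<open>j < k\<close> by (simp add: words_def)
    then have "dot n x (encode k G ?e) = 0"
      using that(1) by blast
    moreover have "dot n x (encode k G ?e) = dot n x (G j)"
      using \<open>j < k\<close> by (simp add: dot_encode if_distrib[of "\<lambda>z. z * _"] cong: if_cong)
    ultimately show ?thesis
      by simp
  qed
  then show ?thesis
    by (auto simp: dual_code_def dot_encode)
qed

lemma card_dual_code_encode:
  fixes G :: "nat \<Rightarrow> nat \<Rightarrow> 'a::{finite,field}"
  assumes "k \<le> n"
    and trivial: "\<And>x. x \<in> dual_code n (encode k G ` words k) \<Longrightarrow> x \<in> words k \<Longrightarrow> x = 0"
  shows "card (dual_code n (encode k G ` words k)) * CARD('a) ^ k = CARD('a) ^ n"
proof -
  define s where "s x = (\<lambda>j. if j < k then dot n x (G j) else 0)" for x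
  have kernel: "{x \<in> words n. s x = 0} = dual_code n (encode k G ` words k)"
    by (auto simp: dual_code_encode s_def fun_eq_iff)
  have diff: "s (x - y) = s x - s y" for x y
    by (simp add: s_def fun_eq_iff dot_diff_left)
  have "inj_on s (words k)"
  proof (rule inj_onI)
    fix x y assume "x \<in> words k" "y \<in> words k" "s x = s y"
    then have "x - y \<in> words k" "x - y \<in> dual_code n (encode k G ` words k)"
      using words_mono[OF \<open>k \<le> n\<close>] words_diff
      by (auto simp: diff simp flip: kernel)
    then have "x - y = 0"
      using trivial by blast
    then show "x = y"
      by simp
  qed
  moreover have "s x \<in> words k" for x
    by (simp add: s_def words_def)
  ultimately show ?thesis
    using card_kernel_mult[of s k n] diff \<open>k \<le> n\<close> by (simp add: kernel)
qed

section \<open>CSS codes\<close>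

interpretation cscale: vector_space "cscale :: complex \<Rightarrow> ('b \<Rightarrow> complex) \<Rightarrow> 'b \<Rightarrow> complex"
  by unfold_locales (auto simp: cscale_def fun_eq_iff algebra_simps)

lemma sum_cscale_apply: "(\<Sum>w\<in>A. cscale (f w) (g w)) x = (\<Sum>w\<in>A. f w * g w x)"
  by (induction A rule: infinite_finite_induct) (auto simp: cscale_def)

lemma cscale_independent_indicators:
  assumes "disjoint \<K>" and "{} \<notin> \<K>"
  shows "cscale.independent (indicator ` \<K> :: ('b \<Rightarrow> complex) set)"
  unfolding cscale.independent_explicit_module
proof (intro allI impI)
  fix t and f :: "('b \<Rightarrow> complex) \<Rightarrow> complex" and w
  assume t: "finite t" "t \<subseteq> indicator ` \<K>" and combination: "(\<Sum>v\<in>t. cscale (f v) v) = 0"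
    and "w \<in> t"
  then obtain K where K: "K \<in> \<K>" "w = indicator K"
    by auto
  then obtain x where "x \<in> K"
    using assms(2) by (metis ex_in_conv)
  have "v x = 0" if v: "v \<in> t - {w}" for v
  proof -
    obtain L where L: "L \<in> \<K>" "v = indicator L"
      using v t(2) by auto
    with v K have "L \<noteq> K"
      by auto
    then have "x \<notin> L"
      using L K \<open>x \<in> K\<close> assms(1) by (auto simp: pairwise_def disjnt_def)
    then show ?thesis
      using L by simp
  qed
  then have "(\<Sum>v\<in>t - {w}. f v * v x) = 0"
    by (intro sum.neutral) simp
  then have "0 = f w * w x"
    using fun_cong[OF combination, of x] sum.remove[OF t(1) \<open>w \<in> t\<close>, of "\<lambda>v. f v * v x"]
    by (simp add: sum_cscale_apply)
  then show "f w = 0"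
    using K \<open>x \<in> K\<close> by simp
qed

lemma cscale_span_indicators:
  fixes v :: "'b \<Rightarrow> complex"
  assumes "finite \<K>" and "disjoint \<K>"
    and outside: "\<And>x. x \<notin> \<Union>\<K> \<Longrightarrow> v x = 0"
    and blockwise: "\<And>K x y. K \<in> \<K> \<Longrightarrow> x \<in> K \<Longrightarrow> y \<in> K \<Longrightarrow> v x = v y"
  shows "v \<in> cscale.span (indicator ` \<K>)"
proof -
  define rep where "rep K = (SOME x. x \<in> K)" for K :: "'b set"
  have "v = (\<Sum>K\<in>\<K>. cscale (v (rep K)) (indicator K))"
  proof
    fix x
    show "v x = (\<Sum>K\<in>\<K>. cscale (v (rep K)) (indicator K)) x"
    proof (cases "x \<in> \<Union>\<K>")
      case True
      then obtain K where K: "K \<in> \<K>" "x \<in> K"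
        by blast
      have "indicator L x = (0 :: complex)" if "L \<in> \<K> - {K}" for L
        using that K assms(2) by (auto simp: indicator_def pairwise_def disjnt_def)
      then have "(\<Sum>L\<in>\<K> - {K}. v (rep L) * indicator L x) = 0"
        by (intro sum.neutral) simp
      then have "(\<Sum>L\<in>\<K>. v (rep L) * indicator L x) = v (rep K)"
        using sum.remove[OF assms(1) K(1), of "\<lambda>L. v (rep L) * indicator L x"] K by simp
      moreover have "rep K \<in> K"
        unfolding rep_def by (rule someI[of _ x]) (rule K(2))
      ultimately show ?thesis
        using blockwise[OF K(1) _ K(2)] by (simp add: sum_cscale_apply)
    next
      case False
      then have "indicator K x = (0 :: complex)" if "K \<in> \<K>" for K
        using that by auto
      then show ?thesis
        using False by (simp add: outside sum_cscale_apply)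
    qed
  qed
  also have "\<dots> \<in> cscale.span (indicator ` \<K>)"
    by (intro cscale.span_sum cscale.span_scale cscale.span_base imageI)
  finally show ?thesis .
qed

lemma inj_indicator: "inj (indicator :: 'b set \<Rightarrow> 'b \<Rightarrow> complex)"
proof (rule injI)
  fix K L :: "'b set"
  assume "indicator K = (indicator L :: 'b \<Rightarrow> complex)"
  then have "indicator K x = (indicator L x :: complex)" for x
    by simp
  then have "x \<in> K \<longleftrightarrow> x \<in> L" for x
    by (metis indicator_simps one_neq_zero)
  then show "K = L"
    by blast
qed

text \<open>The CSS code of a pair \<open>C \<subseteq> D\<close>: the span of the coset states
  \<open>\<Sum>\<^sub>c\<^sub>\<in>\<^sub>C |x + c\<rangle>\<close> for \<open>x \<in> D\<close>, i.e.\ the states supported on \<open>D\<close> that are invariant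
  under translation by \<open>C\<close>.\<close>
definition css_space :: "(nat \<Rightarrow> 'a::plus) set \<Rightarrow> (nat \<Rightarrow> 'a) set \<Rightarrow> ((nat \<Rightarrow> 'a) \<Rightarrow> complex) set" where
  "css_space C D = {v. (\<forall>x. x \<notin> D \<longrightarrow> v x = 0) \<and> (\<forall>x. \<forall>c\<in>C. v (x + c) = v x)}"

locale self_orthogonal_code = linear_code +
  assumes self_orthogonal: "C \<subseteq> dual_code n C"
begin

definition coset :: "(nat \<Rightarrow> 'a) \<Rightarrow> (nat \<Rightarrow> 'a) set" where
  "coset x = (\<lambda>c. x + c) ` C"

definition dual_cosets :: "(nat \<Rightarrow> 'a) set set" where
  "dual_cosets = coset ` dual_code n C"

lemma mem_coset_iff: "y \<in> coset x \<longleftrightarrow> y - x \<in> C"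
  unfolding coset_def by (auto intro: image_eqI[where x = "y - x"])

lemma self_mem_coset: "x \<in> coset x"
  by (simp add: mem_coset_iff zero_in_code)

lemma coset_eqI:
  assumes "y \<in> coset x"
  shows "coset y = coset x"
proof -
  have "y - x \<in> C"
    using assms by (simp add: mem_coset_iff)
  then have "z - y \<in> C \<longleftrightarrow> z - x \<in> C" for z
    using add_in_code[of "z - y" "y - x"] diff_in_code[of "z - x" "y - x"] by auto
  then show ?thesis
    by (auto simp: mem_coset_iff)
qed

lemma coset_subset_dual_code: "x \<in> dual_code n C \<Longrightarrow> coset x \<subseteq> dual_code n C"
  using self_orthogonal by (auto simp: coset_def intro: dual_code_add)

lemma card_coset: "card (coset x) = card C"
  unfolding coset_def by (rule card_image) (simp add: inj_on_def)

lemma disjoint_dual_cosets: "disjoint dual_cosets"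
  unfolding dual_cosets_def pairwise_def disjnt_def
  by (metis coset_eqI disjoint_iff imageE)

lemma Union_dual_cosets: "\<Union> dual_cosets = dual_code n C"
  using coset_subset_dual_code self_mem_coset by (auto simp: dual_cosets_def)

lemma finite_dual_cosets: "finite dual_cosets"
  unfolding dual_cosets_def dual_code_def by simp

lemma card_dual_code: "card (dual_code n C) = card dual_cosets * card C"
proof -
  have "finite (\<Union> dual_cosets)"
    by (simp add: Union_dual_cosets dual_code_def)
  then have "card C * card dual_cosets = card (\<Union> dual_cosets)"
    using finite_dual_cosets disjoint_dual_cosets
    by (intro card_partition) (auto simp: dual_cosets_def card_coset pairwise_def disjnt_def)
  then show ?thesis
    by (simp add: Union_dual_cosets mult.commute)
qed

lemma css_space_subspace: "cscale.subspace (css_space C (dual_code n C))"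
  by (auto simp: cscale.subspace_def css_space_def cscale_def)

lemma css_space_subset_Vn: "css_space C (dual_code n C) \<subseteq> Vn n"
  by (auto simp: css_space_def Vn_def dual_code_def)

lemma indicator_coset_in_css_space:
  assumes "x \<in> dual_code n C"
  shows "indicator (coset x) \<in> css_space C (dual_code n C)"
proof -
  have "y + c \<in> coset x \<longleftrightarrow> y \<in> coset x" if "c \<in> C" for y c
    using that add_in_code[of "y - x" c] diff_in_code[of "y + c - x" c]
    by (auto simp: mem_coset_iff algebra_simps)
  then show ?thesis
    using coset_subset_dual_code[OF assms] by (auto simp: css_space_def indicator_def)
qed

lemma dim_css_space: "cscale.dim (css_space C (dual_code n C)) = card dual_cosets"
proof (rule cscale.dim_unique)
  show "indicator ` dual_cosets \<subseteq> css_space C (dual_code n C)"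
    by (auto simp: dual_cosets_def indicator_coset_in_css_space)
  show "css_space C (dual_code n C) \<subseteq> cscale.span (indicator ` dual_cosets)"
  proof
    fix v assume v: "v \<in> css_space C (dual_code n C)"
    show "v \<in> cscale.span (indicator ` dual_cosets)"
    proof (rule cscale_span_indicators[OF finite_dual_cosets disjoint_dual_cosets])
      show "v x = 0" if "x \<notin> \<Union> dual_cosets" for x
        using v that by (simp add: Union_dual_cosets css_space_def)
      show "v x = v y" if "K \<in> dual_cosets" "x \<in> K" "y \<in> K" for K x y
      proof -
        have "coset x = coset y"
          using that coset_eqI by (auto simp: dual_cosets_def)
        then have "x - y \<in> C"
          using self_mem_coset[of x] by (simp add: mem_coset_iff)
        then have "v (y + (x - y)) = v y"
          using v unfolding css_space_def by blast
        then show ?thesis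
          by simp
      qed
    qed
  qed
  show "cscale.independent (indicator ` dual_cosets)"
    by (rule cscale_independent_indicators[OF disjoint_dual_cosets])
      (use self_mem_coset in \<open>auto simp: dual_cosets_def\<close>)
  show "card ((indicator :: _ \<Rightarrow> _ \<Rightarrow> complex) ` dual_cosets) = card dual_cosets"
    by (rule card_image[OF inj_on_subset[OF inj_indicator subset_UNIV]])
qed

lemma css_space_translate:
  "v \<in> css_space C (dual_code n C) \<Longrightarrow> c \<in> C \<Longrightarrow> v (x + c) = v x"
  by (simp add: css_space_def)

lemma css_space_outside:
  "v \<in> css_space C (dual_code n C) \<Longrightarrow> x \<notin> dual_code n C \<Longrightarrow> v x = 0"
  by (simp add: css_space_def)

text \<open>An \<open>X\<close>-error outside \<open>D\<close> moves the support of a code state off \<open>D\<close>.\<close>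
lemma qinner_err_apply_not_dual:
  assumes u: "u \<in> css_space C (dual_code n C)" and v: "v \<in> css_space C (dual_code n C)"
    and a: "a \<notin> dual_code n C"
  shows "qinner n u (err_apply n c a b v) = 0"
  unfolding qinner_def err_apply_def
proof (intro sum.neutral ballI)
  fix x
  have "u x = 0 \<or> v (x - a) = 0"
  proof (rule ccontr)
    assume "\<not> ?thesis"
    then have "x \<in> dual_code n C" "x - a \<in> dual_code n C"
      using css_space_outside[OF u] css_space_outside[OF v] by blast+
    then have "x - (x - a) \<in> dual_code n C"
      by (rule dual_code_diff)
    then show False
      using a by simp
  qed
  then show "cnj (u x) * (if x \<in> words n then omega_nat TYPE('a) c
      * (\<Prod>i<n. omega_pow (ftrace (b i * (x i - a i)))) * v (x - a) else 0) = 0"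
    by auto
qed

text \<open>A \<open>Z\<close>-error outside \<open>D\<close> is detected: translating by a suitable \<open>c \<in> C\<close>
  multiplies the character sum by a nontrivial phase and leaves it unchanged.\<close>
lemma css_character_sum_not_dual:
  assumes card: "CARD('a) = 2 ^ e" "0 < e"
    and u: "u \<in> css_space C (dual_code n C)" and v: "v \<in> css_space C (dual_code n C)"
    and b: "b \<in> words n" "b \<notin> dual_code n C"
  shows "(\<Sum>x\<in>words n. cnj (u x) * v x * omega_pow (ftrace (dot n b x))) = 0"
proof -
  define S where "S = (\<Sum>x\<in>words n. cnj (u x) * v x * omega_pow (ftrace (dot n b x)))"
  obtain c where c: "c \<in> C" "dot n b c \<noteq> 0"
    using b by (auto simp: dual_code_def)
  obtain g :: 'a where g: "omega_pow (ftrace g) \<noteq> 1"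
    using ex_omega_pow_ftrace_neq_one[OF card] by blast
  define t where "t = g / dot n b c"
  define c' where "c' = (\<lambda>i. t * c i)"
  have "c' \<in> C"
    unfolding c'_def using c(1) by (rule scale_in_code)
  moreover have "dot n b c' = g"
    unfolding c'_def dot_scale_right t_def using c(2) by simp
  ultimately have c': "c' \<in> C" "c' \<in> words n" "dot n b c' = g"
    using code_subset_words by auto
  have "S = (\<Sum>x\<in>words n. cnj (u (x + c')) * v (x + c') * omega_pow (ftrace (dot n b (x + c'))))"
    unfolding S_def using c'(2)
    by (intro sum.reindex_bij_witness[of _ "\<lambda>x. x + c'" "\<lambda>x. x - c'"]) (auto intro: words_add words_diff)
  also have "\<dots> = omega_pow (ftrace g) * S"
    unfolding S_def sum_distrib_left
    by (intro sum.cong refl)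
      (simp add: css_space_translate[OF u c'(1)] css_space_translate[OF v c'(1)] dot_add_right c'(3)
        omega_pow_ftrace_add[OF card])
  finally have "(1 - omega_pow (ftrace g)) * S = 0"
    by (simp add: algebra_simps)
  then show ?thesis
    using g by (simp add: S_def)
qed

lemma css_has_min_distance:
  assumes card: "CARD('a) = 2 ^ e" "0 < e"
    and "0 < d" and distance: "\<And>x. x \<in> dual_code n C \<Longrightarrow> hamming_weight n x < d \<Longrightarrow> x = 0"
  shows "has_min_distance n (css_space C (dual_code n C)) d"
  unfolding has_min_distance_def
proof (intro ballI impI allI)
  fix u v c and a b :: "nat \<Rightarrow> 'a"
  assume u: "u \<in> css_space C (dual_code n C)" and v: "v \<in> css_space C (dual_code n C)"
    and orthogonal: "qinner n u v = 0"
    and error: "a \<in> words n \<and> b \<in> words n \<and> err_weight n a b \<le> d - 1"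
  have "err_weight n a b < d"
    using error \<open>0 < d\<close> by linarith
  then have weights: "hamming_weight n a < d" "hamming_weight n b < d"
    by (auto intro: le_less_trans[OF hamming_weight_le_err_weight(1)]
        le_less_trans[OF hamming_weight_le_err_weight(2)])
  show "qinner n u (err_apply n c a b v) = 0"
  proof (cases "a \<in> dual_code n C")
    case False
    then show ?thesis
      by (rule qinner_err_apply_not_dual[OF u v])
  next
    case True
    then have "a = 0"
      using distance weights(1) by blast
    then have "qinner n u (err_apply n c a b v)
        = omega_nat TYPE('a) c * (\<Sum>x\<in>words n. cnj (u x) * v x * omega_pow (ftrace (dot n b x)))"
      unfolding qinner_def err_apply_def dot_def sum_distrib_left
      by (intro sum.cong refl) (simp add: omega_pow_ftrace_sum[OF card] mult_ac)
    also have "(\<Sum>x\<in>words n. cnj (u x) * v x * omega_pow (ftrace (dot n b x))) = 0"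
    proof (cases "b \<in> dual_code n C")
      case True
      then have "b = 0"
        using distance weights(2) by blast
      then show ?thesis
        using orthogonal by (simp add: qinner_def dot_def ftrace_zero[OF card] omega_pow_zero[OF card])
    next
      case False
      then show ?thesis
        using css_character_sum_not_dual[OF card u v] error by blast
    qed
    finally show ?thesis
      by simp
  qed
qed

theorem css_is_quantum_code:
  assumes card: "CARD('a) = 2 ^ e" "0 < e"
    and "0 < d" and distance: "\<And>x. x \<in> dual_code n C \<Longrightarrow> hamming_weight n x < d \<Longrightarrow> x = 0"
    and card_dual: "card (dual_code n C) = CARD('a) ^ k * card C"
  shows "is_quantum_code n k d (css_space C (dual_code n C))"
proof -
  have "card dual_cosets = CARD('a) ^ k"
    using card_dual card_dual_code card_code_pos by simp
  then show ?thesis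
    unfolding is_quantum_code_def
    using css_space_subset_Vn css_space_subspace dim_css_space css_has_min_distance[OF card \<open>0 < d\<close> distance]
    by simp
qed

end

section \<open>Extended generalised Reed--Solomon codes\<close>

definition field_enum :: "nat \<Rightarrow> 'a::finite" where
  "field_enum = (SOME f :: nat \<Rightarrow> 'a. bij_betw f {..<CARD('a)} UNIV)"

lemma bij_field_enum: "bij_betw (field_enum :: nat \<Rightarrow> 'a::finite) {..<CARD('a)} UNIV"
proof -
  have "\<exists>f. bij_betw f {..<CARD('a)} (UNIV :: 'a set)"
    using ex_bij_betw_nat_finite[of "UNIV :: 'a set"] by (simp add: lessThan_atLeast0)
  then show ?thesis
    unfolding field_enum_def by (rule someI_ex)
qed

lemma sum_coeff_power:
  fixes f :: "'a::comm_semiring_1 poly"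
  assumes "degree f < k"
  shows "(\<Sum>j<k. coeff f j * x ^ j) = poly f x"
proof -
  have "(\<Sum>j<k. coeff f j * x ^ j) = (\<Sum>j\<le>degree f. coeff f j * x ^ j)"
    using assms by (intro sum.mono_neutral_right) (auto simp: coeff_eq_0)
  then show ?thesis
    by (simp add: poly_altdef)
qed

lemma coeff_words: "degree f < k \<Longrightarrow> coeff f \<in> words k"
  by (simp add: words_def coeff_eq_0)

locale extended_grs =
  fixes k :: nat and u :: "'a::{finite,field} poly" and w :: "nat \<Rightarrow> 'a"
  assumes dimension_pos: "0 < k"
    and u_monic: "lead_coeff u = 1"
    and u_degree: "degree u + 2 * (k - 1) = CARD('a) - 1"
    and u_nonvanishing: "poly u x \<noteq> 0"
    and weight_square: "w i ^ 2 = poly u (field_enum i)"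
begin

text \<open>Generator matrix of the extended generalised Reed--Solomon code: a message polynomial
  \<open>f\<close> of degree \<open>< k\<close> is encoded as \<open>(w\<^sub>0 f(\<alpha>\<^sub>0), \<dots>, w\<^sub>q\<^sub>-\<^sub>1 f(\<alpha>\<^sub>q\<^sub>-\<^sub>1), f\<^sub>k\<^sub>-\<^sub>1)\<close>,
  where \<open>\<alpha>\<^sub>i = field_enum i\<close> runs through the field and the last coordinate, the coefficient
  of \<open>x\<^sup>k\<^sup>-\<^sup>1\<close>, is the evaluation at infinity.\<close>
definition generator :: "nat \<Rightarrow> nat \<Rightarrow> 'a" where
  "generator j i = (if i < CARD('a) then w i * field_enum i ^ j else of_bool (i = CARD('a) \<and> j = k - 1))"

abbreviation code :: "(nat \<Rightarrow> 'a) set" where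
  "code \<equiv> encode k generator ` words k"

lemma dimension_less_card: "k < CARD('a)"
proof -
  have "2 \<le> CARD('a)"
    using card_mono[of UNIV "{0::'a, 1}"] by simp
  then show ?thesis
    using u_degree by linarith
qed

lemma weight_nonzero: "w i \<noteq> 0"
  using weight_square[of i] u_nonvanishing by auto

lemma generator_words: "generator j \<in> words (CARD('a) + 1)"
  by (simp add: generator_def words_def)

lemma encode_eval:
  "i < CARD('a) \<Longrightarrow> encode k generator a i = w i * (\<Sum>j<k. a j * field_enum i ^ j)"
  by (simp add: encode_def generator_def sum_distrib_left mult_ac)

lemma encode_infinity: "encode k generator a (CARD('a)) = a (k - 1)"
  using dimension_pos by (simp add: encode_def generator_def of_bool_def if_distrib[of "\<lambda>z. _ * z"] cong: if_cong)

lemma encode_poly: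
  assumes "degree f < k" and "i < CARD('a)"
  shows "encode k generator (coeff f) i = w i * poly f (field_enum i)"
  using assms by (simp add: encode_eval sum_coeff_power)

text \<open>Self-orthogonality: since \<open>w\<^sub>i\<^sup>2 = u(\<alpha>\<^sub>i)\<close>, the finite part of the inner product is
  \<open>\<Sum>\<^sub>x u(x) f(x) g(x)\<close>; by the moments of \<open>u\<close> only the top coefficients survive and give
  \<open>-f\<^sub>k\<^sub>-\<^sub>1 g\<^sub>k\<^sub>-\<^sub>1\<close>, which the coordinate at infinity cancels.\<close>
lemma dot_encode_encode: "dot (CARD('a) + 1) (encode k generator a) (encode k generator b) = 0"
proof -
  let ?A = "\<lambda>x. \<Sum>j<k. a j * x ^ j" and ?B = "\<lambda>x. \<Sum>j<k. b j * x ^ j"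
  have "(\<Sum>i<CARD('a). encode k generator a i * encode k generator b i)
      = (\<Sum>i<CARD('a). poly u (field_enum i) * ?A (field_enum i) * ?B (field_enum i))"
    by (intro sum.cong refl) (simp add: encode_eval flip: weight_square, simp add: power2_eq_square mult_ac)
  also have "\<dots> = (\<Sum>x\<in>UNIV. poly u x * ?A x * ?B x)"
    by (rule sum.reindex_bij_betw[OF bij_field_enum])
  also have "\<dots> = (\<Sum>j<k. \<Sum>j'<k. a j * b j' * (\<Sum>x\<in>UNIV. poly u x * x ^ (j + j')))"
    by (simp add: sum_distrib_left sum_distrib_right power_add mult_ac sum.swap[of _ UNIV])
  also have "\<dots> = (\<Sum>j<k. \<Sum>j'<k. if j' = k - 1 then if j = k - 1 then - (a (k - 1) * b (k - 1)) else 0 else 0)"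
  proof (intro sum.cong refl)
    fix j j' assume "j \<in> {..<k}" "j' \<in> {..<k}"
    then have "j + j' \<le> 2 * (k - 1)" and "j + j' = 2 * (k - 1) \<longleftrightarrow> j = k - 1 \<and> j' = k - 1"
      by auto
    then show "a j * b j' * (\<Sum>x\<in>UNIV. poly u x * x ^ (j + j'))
        = (if j' = k - 1 then if j = k - 1 then - (a (k - 1) * b (k - 1)) else 0 else 0)"
      by (auto simp: monic_poly_moments[OF u_monic u_degree])
  qed
  also have "\<dots> = - (a (k - 1) * b (k - 1))"
    using dimension_pos by simp
  finally show ?thesis
    by (simp add: dot_def encode_infinity)
qed

sublocale self_orthogonal_code "CARD('a) + 1" code
proof -
  interpret linear_code "CARD('a) + 1" code
    using generator_words by (rule linear_code_encode)
  show "self_orthogonal_code (CARD('a) + 1) code"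
  proof
    show "code \<subseteq> dual_code (CARD('a) + 1) code"
      using encode_words[OF generator_words] dot_encode_encode by (auto simp: dual_code_def)
  qed
qed

end

lemma field_enum_vanishing_poly:
  fixes F :: "nat set"
  assumes "F \<subseteq> {..<CARD('a)}"
  obtains P :: "'a::{finite,field} poly" where "lead_coeff P = 1" and "degree P = card F"
    and "\<And>i. i \<in> F \<Longrightarrow> poly P (field_enum i) = 0"
    and "\<And>i. i < CARD('a) \<Longrightarrow> i \<notin> F \<Longrightarrow> poly P (field_enum i) \<noteq> 0"
proof
  let ?P = "\<Prod>i\<in>F. [:- field_enum i, 1::'a:]"
  have "finite F"
    using assms finite_subset by blast
  show "lead_coeff ?P = 1"
    by (simp add: lead_coeff_prod)
  show "degree ?P = card F"
    by (subst degree_prod_eq_sum_degree) auto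
  show "poly ?P (field_enum i) = 0" if "i \<in> F" for i
    using that \<open>finite F\<close> by (auto simp: poly_prod)
  show "poly ?P (field_enum i) \<noteq> 0" if "i < CARD('a)" "i \<notin> F" for i
  proof -
    have "field_enum i \<noteq> (field_enum j :: 'a)" if "j \<in> F" for j
      using bij_field_enum[where 'a = 'a] \<open>i < CARD('a)\<close> \<open>i \<notin> F\<close> that assms
      by (auto simp: bij_betw_def inj_on_def)
    then show ?thesis
      using \<open>finite F\<close> by (auto simp: poly_prod)
  qed
qed

context extended_grs
begin

text \<open>The codeword comes from a polynomial with the prescribed roots, padded by a power of \<open>x\<close>
  to degree \<open>k - 1\<close> when the nonzero coordinate is the one at infinity.\<close>
lemma exists_codeword_separating:
  assumes "S \<subseteq> {..CARD('a)}" and "card S \<le> k" and "i0 \<in> S"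
  obtains c where "c \<in> code" and "c i0 \<noteq> 0" and "\<And>i. i \<in> S \<Longrightarrow> i \<noteq> i0 \<Longrightarrow> c i = 0"
proof (cases "i0 = CARD('a)")
  case True
  have "finite S"
    using assms(1) finite_subset by blast
  have F: "S - {i0} \<subseteq> {..<CARD('a)}" "card (S - {i0}) \<le> k - 1"
    using assms True \<open>finite S\<close> by auto
  obtain P where P: "lead_coeff P = 1" "degree P = card (S - {i0})"
    "\<And>i. i \<in> S - {i0} \<Longrightarrow> poly P (field_enum i) = (0 :: 'a)"
    by (rule field_enum_vanishing_poly[OF F(1)]) blast
  define f where "f = P * [:0, 1:] ^ (k - 1 - card (S - {i0}))"
  have "P \<noteq> 0"
    using P(1) by auto
  then have "degree f = degree P + (k - 1 - card (S - {i0}))"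
    unfolding f_def by (subst degree_mult_eq) (auto simp: degree_linear_power)
  moreover have "lead_coeff f = 1"
    unfolding f_def lead_coeff_mult lead_coeff_power P(1) by simp
  ultimately have "degree f = k - 1" "lead_coeff f = 1"
    using P(2) F(2) by simp_all
  then have f: "degree f < k" "coeff f (k - 1) = 1"
    using dimension_pos by auto
  show ?thesis
  proof (rule that)
    show "encode k generator (coeff f) \<in> code"
      using f(1) by (simp add: coeff_words)
    show "encode k generator (coeff f) i0 \<noteq> 0"
      using True f(2) by (simp add: encode_infinity)
    show "encode k generator (coeff f) i = 0" if "i \<in> S" "i \<noteq> i0" for i
      using that F(1) P(3) f(1) by (auto simp: encode_poly f_def)
  qed
next
  case False
  with assms have i0: "i0 < CARD('a)"
    by auto
  have "finite S"
    using assms(1) finite_subset by blast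
  define F where "F = S - {i0, CARD('a)}"
  have "card F \<le> card (S - {i0})"
    using \<open>finite S\<close> by (intro card_mono) (auto simp: F_def)
  then have F: "F \<subseteq> {..<CARD('a)}" "card F \<le> k - 1"
    using assms \<open>finite S\<close> by (auto simp: F_def)
  obtain P where P: "lead_coeff P = 1" "degree P = card F"
    "\<And>i. i \<in> F \<Longrightarrow> poly P (field_enum i) = (0 :: 'a)"
    "\<And>i. i < CARD('a) \<Longrightarrow> i \<notin> F \<Longrightarrow> poly P (field_enum i) \<noteq> 0"
    by (rule field_enum_vanishing_poly[OF F(1)]) blast
  have degree: "degree P < k"
    using P(2) F(2) dimension_pos by linarith
  show ?thesis
  proof (rule that)
    show "encode k generator (coeff P) \<in> code"
      using degree by (simp add: coeff_words)
    show "encode k generator (coeff P) i0 \<noteq> 0"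
      using i0 P(4) by (simp add: encode_poly[OF degree] weight_nonzero F_def)
    show "encode k generator (coeff P) i = 0" if "i \<in> S" "i \<noteq> i0" for i
    proof (cases "i = CARD('a)")
      case True
      then have "{i0, CARD('a)} \<subseteq> S" "card {i0, CARD('a)} = 2"
        using that i0 \<open>i0 \<in> S\<close> by auto
      then have "card F = card S - 2" "2 \<le> card S"
        using \<open>finite S\<close> card_mono[of S "{i0, CARD('a)}"] by (auto simp: F_def card_Diff_subset)
      then have "degree P < k - 1"
        using P(2) assms(2) by linarith
      then show ?thesis
        using True by (simp add: encode_infinity coeff_eq_0)
    next
      case False
      then show ?thesis
        using that assms(1) P(3) degree by (auto simp: encode_poly F_def)
    qed
  qed
qed

lemma dual_code_distance:
  assumes x: "x \<in> dual_code (CARD('a) + 1) code" and weight: "hamming_weight (CARD('a) + 1) x \<le> k"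
  shows "x = 0"
proof (rule ccontr)
  define S where "S = {i. i < CARD('a) + 1 \<and> x i \<noteq> 0}"
  assume "x \<noteq> 0"
  then obtain i0 where "x i0 \<noteq> 0"
    by (auto simp: fun_eq_iff)
  then have "i0 \<in> S"
    using x by (auto simp: S_def dual_code_def words_def not_le[symmetric])
  moreover have "S \<subseteq> {..CARD('a)}" "card S \<le> k"
    using weight by (auto simp: S_def hamming_weight_def)
  ultimately obtain c where c: "c \<in> code" "c i0 \<noteq> 0" "\<And>i. i \<in> S \<Longrightarrow> i \<noteq> i0 \<Longrightarrow> c i = 0"
    using exists_codeword_separating by blast
  have "dot (CARD('a) + 1) x c = (\<Sum>i\<in>{i0}. x i * c i)"
    unfolding dot_def using \<open>i0 \<in> S\<close> c(3)
    by (intro sum.mono_neutral_right) (auto simp: S_def)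
  also have "\<dots> \<noteq> 0"
    using \<open>x i0 \<noteq> 0\<close> c(2) by simp
  finally show False
    using x c(1) by (auto simp: dual_code_def)
qed

lemma inj_on_encode: "inj_on (encode k generator) (words k)"
proof (rule inj_onI)
  fix a b assume a: "a \<in> words k" and b: "b \<in> words k"
    and eq: "encode k generator a = encode k generator b"
  define d where "d = a - b"
  have d: "d \<in> words k"
    unfolding d_def using a b by (rule words_diff)
  have "encode k generator d = 0"
    using eq encode_add[of k generator d b] by (simp add: d_def)
  define p where "p = (\<Sum>j<k. monom (d j) j)"
  have coeff_p: "coeff p = d"
    using d by (auto simp: p_def coeff_sum coeff_monom words_def fun_eq_iff)
  have degree: "degree p < k"
    using d dimension_pos by (intro le_less_trans[OF degree_le[of "k - 1"]]) (auto simp: coeff_p words_def)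
  have "poly p x = 0" for x
  proof -
    have "x \<in> field_enum ` {..<CARD('a)}"
      using bij_field_enum[where 'a = 'a] by (simp add: bij_betw_def)
    then obtain i where i: "i < CARD('a)" "x = field_enum i"
      by auto
    have "w i * poly p (field_enum i) = 0"
      using encode_poly[OF degree i(1)] \<open>encode k generator d = 0\<close> by (simp add: coeff_p)
    then show ?thesis
      using i(2) weight_nonzero by simp
  qed
  have "p = 0"
  proof (rule ccontr)
    assume "p \<noteq> 0"
    moreover have "degree p < card (UNIV :: 'a set)"
      using degree dimension_less_card by simp
    ultimately obtain x where "poly p x \<noteq> 0"
      by (rule poly_nonroot_exists) auto
    then show False
      using \<open>\<And>x. poly p x = 0\<close> by blast
  qed
  then show "a = b"
    using coeff_p by (simp add: d_def fun_eq_iff)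
qed

lemma card_code: "card code = CARD('a) ^ k"
  using card_image[OF inj_on_encode] by (simp add: card_words)

lemma card_dual_code_eq:
  "card (dual_code (CARD('a) + 1) code) = CARD('a) ^ (CARD('a) + 1 - 2 * k) * card code"
proof -
  have "CARD('a) + 1 = (CARD('a) + 1 - 2 * k) + k + k"
    using u_degree dimension_pos dimension_less_card by linarith
  then have "CARD('a) ^ (CARD('a) + 1) = CARD('a) ^ (CARD('a) + 1 - 2 * k) * CARD('a) ^ k * CARD('a) ^ k"
    by (simp only: power_add[symmetric])
  moreover have "card (dual_code (CARD('a) + 1) code) * CARD('a) ^ k = CARD('a) ^ (CARD('a) + 1)"
    using dimension_less_card
    by (intro card_dual_code_encode) (auto intro: dual_code_distance dest: hamming_weight_words)
  ultimately show ?thesis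
    by (simp add: card_code)
qed

end

lemma exists_power_neq_self:
  assumes "1 < l" and "l < CARD('a::{finite,field})"
  shows "\<exists>c :: 'a. c ^ l \<noteq> c"
proof -
  let ?p = "monom (1::'a) l - monom 1 1"
  have "coeff ?p l = 1"
    using assms(1) by (simp add: coeff_monom)
  then have nonzero: "?p \<noteq> 0"
    by (metis coeff_0 one_neq_zero)
  have "degree ?p \<le> l"
    using assms(1) by (intro degree_diff_le) (simp_all add: degree_monom_eq)
  then have degree: "degree ?p < card (UNIV :: 'a set)"
    using assms(2) by simp
  obtain c where "poly ?p c \<noteq> 0"
    by (rule poly_nonroot_exists[OF nonzero degree]) simp_all
  then show ?thesis
    by (auto simp: poly_monom)
qed

lemma exists_not_square_plus_self:
  assumes "CARD('a::{finite,field}) = 2 ^ e" and "0 < e"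
  shows "\<exists>c :: 'a. \<forall>b. b ^ 2 + b \<noteq> c"
proof -
  let ?f = "\<lambda>b::'a. b ^ 2 + b"
  have "?f 0 = ?f 1"
    using two_eq_zero[OF assms] by simp
  then have "\<not> inj ?f"
    using inj_eq[of ?f 0 1] by auto
  then have "\<not> surj ?f"
    using finite_UNIV_surj_inj[of ?f] by auto
  then show ?thesis
    unfolding surj_def by (metis (no_types))
qed

lemma quantum_mds_parameters:
  fixes l :: nat
  assumes "2 < l"
  shows "l + 1 + (l - 1) * (l - 2) + 2 * (l - 2) = l ^ 2 - 1"
    and "l ^ 2 - 2 * l + 3 = l ^ 2 + 1 - 2 * (l - 1)"
    and "2 * l + (l ^ 2 - 2 * l + 3) = l ^ 2 + 1 + 2"
proof -
  obtain m where m: "l = m + 3"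
    using assms by (intro that[of "l - 3"]) simp
  show "l + 1 + (l - 1) * (l - 2) + 2 * (l - 2) = l ^ 2 - 1"
    by (simp add: m power2_eq_square algebra_simps)
  show "l ^ 2 - 2 * l + 3 = l ^ 2 + 1 - 2 * (l - 1)"
    by (simp add: m power2_eq_square algebra_simps)
  show "2 * l + (l ^ 2 - 2 * l + 3) = l ^ 2 + 1 + 2"
    by (simp add: m power2_eq_square algebra_simps)
qed

text \<open>The weight polynomial of the construction,
  \<open>u = (x\<^bsup>l+1\<^esup> + c\<^sub>1)(x\<^sup>2 + x + c\<^sub>2)\<^bsup>(l-1)(l-2)/2\<^esup>\<close>: the first factor has no roots because
  \<open>x\<^bsup>l+1\<^esup>\<close> lies in the subfield \<open>F\<^sub>l\<close> while \<open>c\<^sub>1\<close> does not, the second because \<open>c\<^sub>2\<close> is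
  not of the form \<open>b\<^sup>2 + b\<close>.\<close>
lemma exists_nonvanishing_weight_polynomial:
  fixes l s :: nat
  assumes card: "CARD('a) = l ^ 2" and l: "l = 2 ^ s" "2 < l"
  obtains u :: "'a::{finite,field} poly" where "lead_coeff u = 1" and "degree u + 2 * (l - 2) = CARD('a) - 1"
    and "\<And>x. poly u x \<noteq> 0"
proof -
  have card2: "CARD('a) = 2 ^ (2 * s)" "0 < 2 * s"
    using card l by (auto simp: power_mult[symmetric] mult.commute intro: Nat.gr0I)
  have "l < CARD('a)"
    using card l(2) by (simp add: power2_eq_square)
  then obtain c1 :: 'a where c1: "c1 ^ l \<noteq> c1"
    using exists_power_neq_self[of l] l(2) by auto
  obtain c2 :: 'a where c2: "\<And>b. b ^ 2 + b \<noteq> c2"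
    using exists_not_square_plus_self[OF card2] by blast
  have "even (l - 2)"
    using l by (cases s) auto
  then have "even ((l - 1) * (l - 2))"
    by simp
  then obtain t where t: "(l - 1) * (l - 2) = 2 * t"
    by (rule evenE)
  define f where "f = monom (1::'a) (l + 1) + [:c1:]"
  define u where "u = f * [:c2, 1, 1:] ^ t"
  have degree_f: "degree f = l + 1"
    unfolding f_def by (subst degree_add_eq_left) (auto simp: degree_monom_eq)
  have lead: "lead_coeff u = 1"
    using degree_f by (simp add: u_def lead_coeff_mult lead_coeff_power f_def)
  have "f \<noteq> 0"
    using degree_f by auto
  then have "degree u = degree f + t * 2"
    unfolding u_def by (subst degree_mult_eq) (auto simp: degree_power_eq)
  also have "\<dots> = l + 1 + (l - 1) * (l - 2)"
    unfolding degree_f t by simp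
  finally have degree: "degree u + 2 * (l - 2) = CARD('a) - 1"
    using degree_f quantum_mds_parameters(1)[OF l(2)] card by simp
  have "poly u x \<noteq> 0" for x
  proof -
    have "x ^ (l + 1) + c1 \<noteq> 0"
    proof
      assume "x ^ (l + 1) + c1 = 0"
      then have "c1 = - (x ^ (l + 1))"
        by (simp add: eq_neg_iff_add_eq_0 add.commute)
      then have c: "c1 = x ^ (l + 1)"
        by (simp add: uminus_CHAR_2[OF CHAR_eq_two[OF card2]])
      have "c1 ^ l = x ^ ((l + 1) * l)"
        unfolding c by (rule power_mult[symmetric])
      also have "(l + 1) * l = CARD('a) + l"
        using card by (simp add: power2_eq_square)
      also have "x ^ (CARD('a) + l) = x ^ (l + 1)"
        by (simp add: power_add finite_field_power_card)
      finally show False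
        using c c1 by simp
    qed
    moreover have "c2 + x * (1 + x) \<noteq> 0"
    proof
      assume "c2 + x * (1 + x) = 0"
      then have "c2 = - (x * (1 + x))"
        by (simp add: eq_neg_iff_add_eq_0)
      then have "c2 = x ^ 2 + x"
        by (simp add: uminus_CHAR_2[OF CHAR_eq_two[OF card2]] power2_eq_square algebra_simps)
      then show False
        using c2 by blast
    qed
    ultimately show ?thesis
      by (simp add: u_def f_def poly_monom)
  qed
  with lead degree show ?thesis
    using that by blast
qed

theorem mainTheorem5:
  fixes s l :: nat
  assumes "l = 2 ^ s" and "l > 2"
    and "CARD('a::{finite,field}) = l ^ 2"
  shows "\<exists>Q :: ((nat \<Rightarrow> 'a) \<Rightarrow> complex) set.
           is_quantum_MDS_code (l ^ 2 + 1) (l ^ 2 - 2 * l + 3) l Q"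
proof -
  have card: "CARD('a) = 2 ^ (2 * s)" "0 < 2 * s"
    using assms by (auto simp: power_mult[symmetric] mult.commute intro: Nat.gr0I)
  obtain u :: "'a poly" where u: "lead_coeff u = 1" "degree u + 2 * (l - 2) = CARD('a) - 1"
    "\<And>x. poly u x \<noteq> 0"
    using exists_nonvanishing_weight_polynomial[OF assms(3,1,2)] by blast
  define w where "w i = poly u (field_enum i) ^ 2 ^ (2 * s - 1)" for i
  interpret extended_grs "l - 1" u w
  proof
    show "w i ^ 2 = poly u (field_enum i)" for i
      unfolding w_def by (rule square_root_witness[OF card])
  qed (use u assms(2) in auto)
  let ?k = "l ^ 2 - 2 * l + 3"
  have "card (dual_code (CARD('a) + 1) code) = CARD('a) ^ ?k * card code"
    using card_dual_code_eq quantum_mds_parameters(2)[OF assms(2)] assms(3) by simp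
  then have "is_quantum_code (CARD('a) + 1) ?k l (css_space code (dual_code (CARD('a) + 1) code))"
    using assms(2) dual_code_distance by (intro css_is_quantum_code[OF card]) auto
  then show ?thesis
    unfolding is_quantum_MDS_code_def using quantum_mds_parameters(3)[OF assms(2)] assms(3) by auto
qed

end
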